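(* Let $p\ge2$, $m\ge1$, $d\ge1$ be integers, and let $W\in\mathbb{R}^{d\times p}$, $V\in\mathbb{R}^{p\times d}$. If the ReLU network $s^\theta(x)=V\,\mathrm{ReLU}(Wx)$ exactly realizes modular addition on $\mathcal{X}_m$, i.e. $h_\theta(x)=y(x)$ for every $x\in\mathcal{X}_m$, then \[ d\ \ge\ \frac{m-p}{p+2}. \]
   Context: Let $[p]=\{0,1,\dots,p-1\}$ and $\mathcal{X}_m=\{x\in\{0,1,\dots,m\}^p:\ \|x\|_1=m\}$, with coordinates of $x$ indexed by $[p]$. The label of $x$ is $y(x)=(\sum_{r\in[p]} r\,x_r)\bmod p\in[p]$. $\mathrm{ReLU}(t)=\max\{0,t\}$ is applied entrywise. For a score vector $s^\theta(x)\in\mathbb{R}^p$ with coordinates indexed by $[p]$, the predictor is $h_\theta(x)=\ell$ if $s^\theta_\ell(x)>s^\theta_k(x)$ for all $k\ne\ell$, and $h_\theta(x)=\bot$ (invalid, never equal to a label) otherwise. *)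

theory Defs
  imports Complex_Main
begin

text \<open>Inputs: vectors in {0..m}^p indexed by [p] = {0..<p}, represented as
  functions nat => nat that vanish outside [p].\<close>
definition Xset :: "nat \<Rightarrow> nat \<Rightarrow> (nat \<Rightarrow> nat) set" where
  "Xset p m = {x. (\<forall>r. p \<le> r \<longrightarrow> x r = 0) \<and> (\<forall>r<p. x r \<le> m) \<and> (\<Sum>r<p. x r) = m}"

definition label :: "nat \<Rightarrow> (nat \<Rightarrow> nat) \<Rightarrow> nat" where
  "label p x = (\<Sum>r<p. r * x r) mod p"

definition relu :: "real \<Rightarrow> real" where
  "relu t = max 0 t"

text \<open>Score s(x) = V ReLU(W x), with W a d x p matrix and V a p x d matrix
  (entries W j r, V l j).\<close>
definition score :: "nat \<Rightarrow> nat \<Rightarrow> (nat \<Rightarrow> nat \<Rightarrow> real) \<Rightarrow> (nat \<Rightarrow> nat \<Rightarrow> real)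
    \<Rightarrow> (nat \<Rightarrow> nat) \<Rightarrow> nat \<Rightarrow> real" where
  "score p d W V x l = (\<Sum>j<d. V l j * relu (\<Sum>r<p. W j r * real (x r)))"

definition predict :: "nat \<Rightarrow> nat \<Rightarrow> (nat \<Rightarrow> nat \<Rightarrow> real) \<Rightarrow> (nat \<Rightarrow> nat \<Rightarrow> real)
    \<Rightarrow> (nat \<Rightarrow> nat) \<Rightarrow> nat option" where
  "predict p d W V x =
     (if \<exists>l<p. \<forall>k<p. k \<noteq> l \<longrightarrow> score p d W V x l > score p d W V x k
      then Some (THE l. l < p \<and> (\<forall>k<p. k \<noteq> l \<longrightarrow> score p d W V x l > score p d W V x k))
      else None)"

end

theory Submission
  imports Defs
begin

text \<open>Restrict the network to the inputs (m - t) e0 + t e1, 0 \<le> t \<le> m, whose label is t mod p.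
  Along this segment every pre-activation is an affine function of t. If no neuron changes sign
  strictly on a window [t, t + p], the network is affine there, so the score at t + 1 is a convex
  combination of the scores at t and t + p; both of these prefer the label t mod p, while the
  correct label at t + 1 is different. Hence each of the m div p disjoint windows
  [i p, i p + p] needs a neuron of its own that changes sign on it, and an affine function
  changes sign on at most one of them. So d \<ge> m div p > (m - p) / p.\<close>

lemma predict_eq_SomeD:
  assumes "predict p d W V x = Some l" and "k < p" and "k \<noteq> l"
  shows "score p d W V x k < score p d W V x l"
proof -
  let ?P = "\<lambda>l. l < p \<and> (\<forall>k<p. k \<noteq> l \<longrightarrow> score p d W V x l > score p d W V x k)"
  from assms(1) obtain l0 where l0: "?P l0" and l: "l = (THE l. ?P l)"
    unfolding predict_def by (auto split: if_splits)
  have "(THE l. ?P l) = l0"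
  proof (rule the_equality)
    show "l1 = l0" if "?P l1" for l1
      using that l0 by (metis order.asym)
  qed (fact l0)
  with l l0 assms(2,3) show ?thesis by simp
qed

lemma relu_nonneg_comb:
  fixes a b u v :: real
  assumes "a \<ge> 0" and "b \<ge> 0" and "u * v \<ge> 0"
  shows "relu (a * u + b * v) = a * relu u + b * relu v"
proof (cases "u \<ge> 0 \<and> v \<ge> 0")
  case True
  then show ?thesis using assms by (simp add: relu_def)
next
  case False
  with assms(3) have "u \<le> 0" and "v \<le> 0" by (auto simp: zero_le_mult_iff)
  moreover from this assms(1,2) have "a * u + b * v \<le> 0"
    by (simp add: add_nonpos_nonpos mult_nonneg_nonpos)
  ultimately show ?thesis by (simp add: relu_def)
qed

lemma relu_layer_convex_comb:
  fixes c u v :: "nat \<Rightarrow> real" and a :: real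
  assumes "0 \<le> a" and "a \<le> 1" and "\<And>j. j < d \<Longrightarrow> u j * v j \<ge> 0"
  shows "(\<Sum>j<d. c j * relu ((1 - a) * u j + a * v j))
           = (1 - a) * (\<Sum>j<d. c j * relu (u j)) + a * (\<Sum>j<d. c j * relu (v j))"
proof -
  have "c j * relu ((1 - a) * u j + a * v j) = (1 - a) * (c j * relu (u j)) + a * (c j * relu (v j))"
    if "j < d" for j
  proof -
    have "relu ((1 - a) * u j + a * v j) = (1 - a) * relu (u j) + a * relu (v j)"
      using assms that by (intro relu_nonneg_comb) simp_all
    then show ?thesis by (simp only:) (simp add: algebra_simps)
  qed
  then show ?thesis by (simp add: sum.distrib sum_distrib_left)
qed

lemma affine_sign_change_in_one_interval:
  fixes A B a\<^sub>1 b\<^sub>1 a\<^sub>2 b\<^sub>2 :: real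
  assumes "a\<^sub>1 \<le> b\<^sub>1" and "b\<^sub>1 \<le> a\<^sub>2" and "a\<^sub>2 \<le> b\<^sub>2"
    and "(A + B * a\<^sub>1) * (A + B * b\<^sub>1) < 0" and "(A + B * a\<^sub>2) * (A + B * b\<^sub>2) < 0"
  shows False
proof (cases "B \<ge> 0")
  case True
  then have "B * a\<^sub>1 \<le> B * b\<^sub>1" "B * b\<^sub>1 \<le> B * a\<^sub>2" "B * a\<^sub>2 \<le> B * b\<^sub>2"
    using assms(1-3) by (simp_all add: mult_left_mono)
  then show False using assms(4,5) by (simp add: mult_less_0_iff) linarith
next
  case False
  then have "B * a\<^sub>1 \<ge> B * b\<^sub>1" "B * b\<^sub>1 \<ge> B * a\<^sub>2" "B * a\<^sub>2 \<ge> B * b\<^sub>2"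
    using assms(1-3) by (simp_all add: mult_left_mono_neg)
  then show False using assms(4,5) by (simp add: mult_less_0_iff) linarith
qed

lemma le_of_distinct_witnesses:
  fixes K d :: nat
  assumes "\<And>i. i < K \<Longrightarrow> \<exists>j<d. P i j"
    and "\<And>i i' j. i < K \<Longrightarrow> i' < K \<Longrightarrow> P i j \<Longrightarrow> P i' j \<Longrightarrow> i = i'"
  shows "K \<le> d"
proof -
  from assms(1) have "\<forall>i\<in>{..<K}. \<exists>j. j < d \<and> P i j" by blast
  from bchoice[OF this] obtain J where J: "\<forall>i\<in>{..<K}. J i < d \<and> P i (J i)" by blast
  have "inj_on J {..<K}"
  proof (rule inj_onI)
    fix i i' assume "i \<in> {..<K}" "i' \<in> {..<K}" "J i = J i'"
    with J show "i = i'" by (metis assms(2) lessThan_iff)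
  qed
  moreover have "J ` {..<K} \<subseteq> {..<d}" using J by auto
  ultimately have "card {..<K} \<le> card {..<d}" by (intro card_inj_on_le) simp_all
  then show ?thesis by simp
qed

definition segment_input :: "nat \<Rightarrow> nat \<Rightarrow> nat \<Rightarrow> nat" where
  "segment_input m t r = (if r = 0 then m - t else if r = 1 then t else 0)"

definition preact :: "(nat \<Rightarrow> nat \<Rightarrow> real) \<Rightarrow> nat \<Rightarrow> nat \<Rightarrow> real \<Rightarrow> real" where
  "preact W m j \<tau> = (real m - \<tau>) * W j 0 + \<tau> * W j 1"

lemma sum_lessThan_first_two:
  fixes g :: "nat \<Rightarrow> 'a::comm_monoid_add"
  assumes "p \<ge> 2" and "\<And>r. r \<ge> 2 \<Longrightarrow> g r = 0"
  shows "(\<Sum>r<p. g r) = g 0 + g 1"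
proof -
  have "(\<Sum>r<p. g r) = (\<Sum>r\<in>{0, 1}. g r)"
    by (rule sum.mono_neutral_right) (use assms in auto)
  then show ?thesis by simp
qed

lemma segment_input_in_Xset: "p \<ge> 2 \<Longrightarrow> t \<le> m \<Longrightarrow> segment_input m t \<in> Xset p m"
  by (auto simp: Xset_def segment_input_def sum_lessThan_first_two)

lemma label_segment_input: "p \<ge> 2 \<Longrightarrow> label p (segment_input m t) = t mod p"
  by (simp add: label_def segment_input_def sum_lessThan_first_two)

lemma score_segment_input:
  assumes "p \<ge> 2" and "t \<le> m"
  shows "score p d W V (segment_input m t) l = (\<Sum>j<d. V l j * relu (preact W m j (real t)))"
proof -
  have "(\<Sum>r<p. W j r * real (segment_input m t r)) = preact W m j (real t)" for j
    using assms by (simp add: sum_lessThan_first_two segment_input_def preact_def of_nat_diff)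
  then show ?thesis by (simp add: score_def)
qed

lemma preact_affine: "preact W m j \<tau> = real m * W j 0 + (W j 1 - W j 0) * \<tau>"
  by (simp add: preact_def algebra_simps)

context
  fixes p m d :: nat and W V :: "nat \<Rightarrow> nat \<Rightarrow> real"
  assumes p: "p \<ge> 2"
    and correct: "\<forall>x\<in>Xset p m. predict p d W V x = Some (label p x)"
begin

lemma segment_score_strict_max:
  assumes "t \<le> m" and "k < p" and "k \<noteq> t mod p"
  shows "score p d W V (segment_input m t) k < score p d W V (segment_input m t) (t mod p)"
proof -
  have "predict p d W V (segment_input m t) = Some (t mod p)"
    using correct segment_input_in_Xset[OF p assms(1)] label_segment_input[OF p] by simp
  then show ?thesis using assms(2,3) by (rule predict_eq_SomeD)
qed

lemma window_has_sign_change: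
  assumes "t + p \<le> m"
  shows "\<exists>j<d. preact W m j (real t) * preact W m j (real (t + p)) < 0"
proof (rule ccontr)
  assume "\<not> ?thesis"
  then have no_change: "preact W m j (real t) * preact W m j (real (t + p)) \<ge> 0" if "j < d" for j
    using that by (meson not_less)
  let ?s = "\<lambda>t l. score p d W V (segment_input m t) l"
  define a where "a = 1 / real p"
  have a: "0 < a" "a \<le> 1" using p by (simp_all add: a_def)
  have preact_next: "preact W m j (real (t + 1))
      = (1 - a) * preact W m j (real t) + a * preact W m j (real (t + p))" for j
    using p by (simp add: a_def preact_def field_simps)
  have interp: "?s (t + 1) l = (1 - a) * ?s t l + a * ?s (t + p) l" for l
  proof -
    have "?s (t + 1) l = (\<Sum>j<d. V l j * relu (preact W m j (real (t + 1))))"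
      using assms p by (intro score_segment_input) simp_all
    also have "\<dots> = (\<Sum>j<d. V l j *
        relu ((1 - a) * preact W m j (real t) + a * preact W m j (real (t + p))))"
      by (simp only: preact_next)
    also have "\<dots> = (1 - a) * (\<Sum>j<d. V l j * relu (preact W m j (real t)))
                     + a * (\<Sum>j<d. V l j * relu (preact W m j (real (t + p))))"
      using a no_change by (intro relu_layer_convex_comb) simp_all
    also have "\<dots> = (1 - a) * ?s t l + a * ?s (t + p) l"
      using assms p by (simp only: score_segment_input add_leD1)
    finally show ?thesis .
  qed
  define l l' where "l = t mod p" and "l' = (t + 1) mod p"
  have "l' < p" "l < p" "l' \<noteq> l"
    using p by (simp_all add: l_def l'_def) (simp add: mod_Suc)
  moreover have "(t + p) mod p = l" by (simp add: l_def)
  ultimately have "?s t l' < ?s t l" "?s (t + p) l' < ?s (t + p) l" "?s (t + 1) l < ?s (t + 1) l'"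
    using assms segment_score_strict_max[of t] segment_score_strict_max[of "t + p"]
      segment_score_strict_max[of "t + 1"] by (simp_all add: l_def l'_def)
  then have "(1 - a) * ?s t l' + a * ?s (t + p) l' < (1 - a) * ?s t l + a * ?s (t + p) l"
    using a by (intro add_le_less_mono mult_left_mono mult_strict_left_mono) simp_all
  with interp \<open>?s (t + 1) l < ?s (t + 1) l'\<close> show False by simp
qed

lemma m_div_p_le_width: "m div p \<le> d"
proof (rule le_of_distinct_witnesses)
  let ?change = "\<lambda>i j. preact W m j (real (i * p)) * preact W m j (real (i * p + p)) < 0"
  show "\<exists>j<d. ?change i j" if "i < m div p" for i
  proof -
    have "(i + 1) * p \<le> m div p * p"
      using that by (intro mult_le_mono1) simp
    then have "i * p + p \<le> m div p * p" by simp
    also have "\<dots> \<le> m" by simp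
    finally show ?thesis by (rule window_has_sign_change)
  qed
  show "i = i'" if "?change i j" "?change i' j" for i i' j
  proof (rule ccontr)
    have windows_disjoint: "real (k * p + p) \<le> real (k' * p)" if "k < k'" for k k'
    proof -
      have "(k + 1) * p \<le> k' * p" using that by (intro mult_le_mono1) simp
      then show ?thesis by (simp only: of_nat_le_iff add_mult_distrib mult_1)
    qed
    have crossing: False if "?change k j" "?change k' j" "k < k'" for k k'
      by (rule affine_sign_change_in_one_interval[of "real (k * p)" "real (k * p + p)"
          "real (k' * p)" "real (k' * p + p)" "real m * W j 0" "W j 1 - W j 0"])
        (use that windows_disjoint in \<open>simp_all only: preact_affine of_nat_le_iff le_add1\<close>)
    assume "i \<noteq> i'"
    then consider "i < i'" | "i' < i" by linarith
    then show False by cases (use crossing that in blast)+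
  qed
qed

end

theorem mainTheorem3:
  fixes p m d :: nat and W V :: "nat \<Rightarrow> nat \<Rightarrow> real"
  assumes "p \<ge> 2" and "m \<ge> 1" and "d \<ge> 1"
    and "\<forall>x\<in>Xset p m. predict p d W V x = Some (label p x)"
  shows "real d \<ge> (real m - real p) / (real p + 2)"
proof -
  have "m < p + m div p * p"
    using assms(1) by (intro dividend_less_div_times) simp
  also have "\<dots> \<le> p + d * p"
    using m_div_p_le_width[OF assms(1,4)] by simp
  finally have "real m - real p < real d * real p"
    by (simp flip: of_nat_mult of_nat_add)
  also have "\<dots> \<le> real d * (real p + 2)" by (intro mult_left_mono) simp_all
  finally show ?thesis by (simp add: pos_divide_le_eq)
qed

end
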